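(* Let $A\colon c_c\to c_c$, $(Ax)_1=x_1$, $(Ax)_n=x_n-x_{n-1}$ ($n>1$), and let $g\equiv 0$ on $c_c$ (so $g^*=\delta_{\{0\}}$ on $\ell^2$). Then the adjoint $A^*\colon\ell^2\to\ell^2$ is injective, the only $y\in\ell^2$ with $g^*(-A^*y)<\infty$ is $y=0$, and hence the Fenchel dual problem $$\sup_{y\in\ell^2}\left(-f^*(y)-g^*(-A^*y)\right)$$ has value $0$, attained at $y=0$. Since the primal problem $\inf_{x\in c_c}\left(f(Ax)+g(x)\right)$ has value $\pi^2/12$, this pair of problems has a positive duality gap $\pi^2/12>0$, although $f,g$ are convex, lower semicontinuous and $0\in\operatorname{core}(A\operatorname{dom} g-\operatorname{dom} f)$.
   Context: Let $c_c$ be the space of finitely supported real sequences with the $\ell^2$-norm; its dual is identified with $\ell^2$ via $\langle y,x\rangle=\sum_n y_nx_n$. Let $f\colon c_c\to\mathbb{R}$, $f(x)=\sum_{n=1}^\infty \frac{n^2}{2}(x_n-n^{-2})^2$. For $h\colon c_c\to(-\infty,\infty]$, $h^*(y)=\sup_{x\in c_c}(\langle y,x\rangle-h(x))$ for $y\in\ell^2$. The adjoint $A^*$ is defined by $\langle A^*y,x\rangle=\langle y,Ax\rangle$. $\delta_{\{0\}}$ is the indicator function of $\{0\}$, $\operatorname{dom}h=\{x:h(x)<\infty\}$, $\operatorname{core}$ denotes the algebraic interior. *)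

theory Defs
  imports "HOL-Analysis.Analysis"
begin

text \<open>Sequences are functions nat => real, indexed from 0: index n here is the
paper's index n+1.\<close>

definition cc :: "(nat \<Rightarrow> real) set" where
  "cc = {x. finite {n. x n \<noteq> 0}}"

definition l2 :: "(nat \<Rightarrow> real) set" where
  "l2 = {y. summable (\<lambda>n. (y n)\<^sup>2)}"

definition l2norm :: "(nat \<Rightarrow> real) \<Rightarrow> real" where
  "l2norm x = sqrt (\<Sum>n. (x n)\<^sup>2)"

definition pair :: "(nat \<Rightarrow> real) \<Rightarrow> (nat \<Rightarrow> real) \<Rightarrow> real" where
  "pair y x = (\<Sum>n. y n * x n)"

definition opA :: "(nat \<Rightarrow> real) \<Rightarrow> (nat \<Rightarrow> real)" where
  "opA x = (\<lambda>n. case n of 0 \<Rightarrow> x 0 | Suc m \<Rightarrow> x (Suc m) - x m)"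

definition fobj :: "(nat \<Rightarrow> real) \<Rightarrow> real" where
  "fobj x = (\<Sum>n. (real (Suc n))\<^sup>2 / 2 * (x n - 1 / (real (Suc n))\<^sup>2)\<^sup>2)"

definition fconj :: "((nat \<Rightarrow> real) \<Rightarrow> ereal) \<Rightarrow> (nat \<Rightarrow> real) \<Rightarrow> ereal" where
  "fconj h y = (SUP x\<in>cc. ereal (pair y x) - h x)"

definition adjA :: "(nat \<Rightarrow> real) \<Rightarrow> (nat \<Rightarrow> real)" where
  "adjA y = (THE z. z \<in> l2 \<and> (\<forall>x\<in>cc. pair z x = pair y (opA x)))"

definition edom :: "((nat \<Rightarrow> real) \<Rightarrow> ereal) \<Rightarrow> (nat \<Rightarrow> real) set" where
  "edom h = {x \<in> cc. h x < \<infinity>}"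

definition core :: "(nat \<Rightarrow> real) set \<Rightarrow> (nat \<Rightarrow> real) set" where
  "core S = {x \<in> cc. \<forall>d\<in>cc. \<exists>e>0. \<forall>t. 0 \<le> t \<and> t \<le> e \<longrightarrow> (\<lambda>n. x n + t * d n) \<in> S}"

definition convex_cc :: "((nat \<Rightarrow> real) \<Rightarrow> ereal) \<Rightarrow> bool" where
  "convex_cc h \<longleftrightarrow> (\<forall>x\<in>cc. \<forall>y\<in>cc. \<forall>t::real. 0 \<le> t \<and> t \<le> 1 \<longrightarrow>
      h (\<lambda>n. t * x n + (1 - t) * y n) \<le> ereal t * h x + ereal (1 - t) * h y)"

text \<open>Lower semicontinuity on c_c with respect to the l2 norm (sequential form,
equivalent in a metric space).\<close>
definition lsc_cc :: "((nat \<Rightarrow> real) \<Rightarrow> ereal) \<Rightarrow> bool" where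
  "lsc_cc h \<longleftrightarrow> (\<forall>x\<in>cc. \<forall>X. (\<forall>k. X k \<in> cc) \<and>
      (\<lambda>k. l2norm (\<lambda>n. X k n - x n)) \<longlonglongrightarrow> 0 \<longrightarrow> h x \<le> liminf (\<lambda>k. h (X k)))"

end

theory Submission
  imports Defs
begin

text \<open>Put q_n(w) = (n+1)^2 w^2 / 2 - w, i.e. fquad n w (indices from 0). Expanding the square,
every finitely supported z satisfies f(z) = \<Sum>n q_n(z_n) + \<pi>^2/12. Since q_n(w) \<ge> -w
and the entries of Ax telescope to the last entry of x, which is 0, we get
f(Ax) \<ge> \<pi>^2/12 with equality at x = 0: the primal value is \<pi>^2/12.
Summation by parts gives A^*y = (y_n - y_(n+1))_n, so A^*y = 0 forces y to be constant,
hence y = 0 in l^2. As g^* = \<delta>_{0}, only y = 0 is dual feasible, with dual value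
-f^*(0) = inf f = 0; this infimum is approached by the truncations of (n^-2).\<close>

lemma cc_iff_eventually_zero: "x \<in> cc \<longleftrightarrow> (\<exists>N. \<forall>n\<ge>N. x n = 0)"
  by (auto simp: cc_def finite_nat_set_iff_bounded) (meson not_le)+

lemma zero_in_cc: "(\<lambda>n. 0) \<in> cc"
  by (simp add: cc_def)

lemma pair_eq_sum:
  assumes "\<forall>n\<ge>N. x n = 0"
  shows "pair y x = (\<Sum>n<N. y n * x n)"
  unfolding pair_def by (rule suminf_finite) (use assms in auto)

lemma cc_subset_l2: "cc \<subseteq> l2"
proof
  fix x assume "x \<in> cc"
  then obtain N where "\<forall>n\<ge>N. x n = 0" by (auto simp: cc_iff_eventually_zero)
  then have "summable (\<lambda>n. (x n)\<^sup>2)" by (intro summable_finite[of "{..<N}"]) auto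
  then show "x \<in> l2" by (simp add: l2_def)
qed

lemma zero_in_l2: "(\<lambda>n. 0) \<in> l2"
  by (simp add: l2_def)

lemma l2_diff:
  assumes "y \<in> l2" "z \<in> l2"
  shows "(\<lambda>n. y n - z n) \<in> l2"
proof -
  have majorant: "summable (\<lambda>n. 2 * (y n)\<^sup>2 + 2 * (z n)\<^sup>2)"
    using assms by (auto simp: l2_def intro: summable_add summable_mult)
  have bound: "norm ((y n - z n)\<^sup>2) \<le> 2 * (y n)\<^sup>2 + 2 * (z n)\<^sup>2" for n
    unfolding real_norm_def abs_power2
    using zero_le_power2[of "y n + z n"] by (simp add: power2_eq_square algebra_simps)
  have "summable (\<lambda>n. (y n - z n)\<^sup>2)"
    by (rule summable_comparison_test'[OF majorant bound])
  then show ?thesis by (simp add: l2_def)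
qed

lemma l2_shift: "y \<in> l2 \<Longrightarrow> (\<lambda>n. y (Suc n)) \<in> l2"
  using summable_Suc_iff[of "\<lambda>n. (y n)\<^sup>2"] by (simp add: l2_def)

lemma l2_const_eq_zero: "(\<lambda>n. c) \<in> l2 \<Longrightarrow> c = 0"
  using summable_LIMSEQ_zero[of "\<lambda>n. c\<^sup>2"] by (simp add: l2_def LIMSEQ_const_iff)

lemma abs_le_l2norm:
  assumes "d \<in> l2"
  shows "\<bar>d n\<bar> \<le> l2norm d"
proof -
  have "(\<Sum>m\<in>{n}. (d m)\<^sup>2) \<le> (\<Sum>m. (d m)\<^sup>2)"
    using assms by (intro sum_le_suminf) (auto simp: l2_def)
  then have "sqrt ((d n)\<^sup>2) \<le> sqrt (\<Sum>m. (d m)\<^sup>2)" by (intro real_sqrt_le_mono) simp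
  then show ?thesis by (simp add: l2norm_def)
qed

definition fquad :: "nat \<Rightarrow> real \<Rightarrow> real" where
  "fquad n w = (real (Suc n))\<^sup>2 * w\<^sup>2 / 2 - w"

lemma half_inverse_squares_sums: "(\<lambda>n. 1 / (2 * (real (Suc n))\<^sup>2)) sums (pi\<^sup>2 / 12)"
  using sums_mult[OF inverse_squares_sums, of "1 / 2"] by (simp add: algebra_simps)

lemma fobj_summand_eq:
  "(real (Suc n))\<^sup>2 / 2 * (w - 1 / (real (Suc n))\<^sup>2)\<^sup>2 = fquad n w + 1 / (2 * (real (Suc n))\<^sup>2)"
proof -
  have "a\<^sup>2 / 2 * (w - 1 / a\<^sup>2)\<^sup>2 = (a\<^sup>2 * w\<^sup>2 / 2 - w) + 1 / (2 * a\<^sup>2)" if "a > 0" for a :: real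
    using that by (simp add: field_simps power2_eq_square)
  then show ?thesis unfolding fquad_def by simp
qed

lemma fobj_summand_sums:
  assumes "\<forall>n\<ge>N. z n = 0"
  shows "(\<lambda>n. (real (Suc n))\<^sup>2 / 2 * (z n - 1 / (real (Suc n))\<^sup>2)\<^sup>2)
    sums ((\<Sum>n<N. fquad n (z n)) + pi\<^sup>2 / 12)"
  unfolding fobj_summand_eq
proof (rule sums_add[OF sums_finite half_inverse_squares_sums])
  show "fquad n (z n) = 0" if "n \<notin> {..<N}" for n using assms that by (simp add: fquad_def)
qed simp

lemma fobj_eq_sum:
  assumes "\<forall>n\<ge>N. z n = 0"
  shows "fobj z = (\<Sum>n<N. fquad n (z n)) + pi\<^sup>2 / 12"
  unfolding fobj_def using fobj_summand_sums[OF assms] by (rule sums_unique[symmetric])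

lemma fobj_summable:
  assumes "z \<in> cc"
  shows "summable (\<lambda>n. (real (Suc n))\<^sup>2 / 2 * (z n - 1 / (real (Suc n))\<^sup>2)\<^sup>2)"
proof -
  obtain N where "\<forall>n\<ge>N. z n = 0" using assms by (auto simp: cc_iff_eventually_zero)
  then show ?thesis by (rule sums_summable[OF fobj_summand_sums])
qed

lemma fobj_nonneg: "z \<in> cc \<Longrightarrow> 0 \<le> fobj z"
  unfolding fobj_def by (rule suminf_nonneg[OF fobj_summable]) simp_all

lemma fobj_zero: "fobj (\<lambda>n. 0) = pi\<^sup>2 / 12"
  using fobj_eq_sum[of 0 "\<lambda>n. 0"] by simp

lemma fquad_convex:
  assumes "0 \<le> t" "t \<le> 1"
  shows "fquad n (t * x + (1 - t) * y) \<le> t * fquad n x + (1 - t) * fquad n y"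
proof -
  have "t * fquad n x + (1 - t) * fquad n y - fquad n (t * x + (1 - t) * y)
      = (real (Suc n))\<^sup>2 / 2 * (t * (1 - t)) * (x - y)\<^sup>2"
    unfolding fquad_def by (simp add: power2_eq_square field_simps del: of_nat_Suc)
  moreover have "0 \<le> (real (Suc n))\<^sup>2 / 2 * (t * (1 - t)) * (x - y)\<^sup>2"
    using assms by simp
  ultimately show ?thesis by linarith
qed

lemma fobj_convex: "convex_cc (\<lambda>x. ereal (fobj x))"
  unfolding convex_cc_def
proof (intro ballI allI impI, elim conjE)
  fix x y t assume "x \<in> cc" "y \<in> cc" and t: "0 \<le> t" "t \<le> (1::real)"
  then obtain N where xN: "\<forall>n\<ge>N. x n = 0" and yN: "\<forall>n\<ge>N. y n = 0"
    unfolding cc_iff_eventually_zero by (metis max.boundedE nle_le)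
  have "fobj (\<lambda>n. t * x n + (1 - t) * y n) = (\<Sum>n<N. fquad n (t * x n + (1 - t) * y n)) + pi\<^sup>2 / 12"
    using xN yN by (intro fobj_eq_sum) simp
  also have "\<dots> \<le> (\<Sum>n<N. t * fquad n (x n) + (1 - t) * fquad n (y n)) + pi\<^sup>2 / 12"
    using t by (intro add_right_mono sum_mono fquad_convex)
  also have "\<dots> = t * (\<Sum>n<N. fquad n (x n)) + (1 - t) * (\<Sum>n<N. fquad n (y n)) + pi\<^sup>2 / 12"
    by (simp add: sum.distrib sum_distrib_left)
  also have "\<dots> = t * ((\<Sum>n<N. fquad n (x n)) + pi\<^sup>2 / 12) + (1 - t) * ((\<Sum>n<N. fquad n (y n)) + pi\<^sup>2 / 12)"
    by (simp add: field_simps)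
  also have "\<dots> = t * fobj x + (1 - t) * fobj y"
    using fobj_eq_sum[OF xN] fobj_eq_sum[OF yN] by simp
  finally show "ereal (fobj (\<lambda>n. t * x n + (1 - t) * y n)) \<le> ereal t * ereal (fobj x) + ereal (1 - t) * ereal (fobj y)"
    by simp
qed

lemma opA_zero: "opA (\<lambda>n. 0) = (\<lambda>n. 0)"
  by (auto simp: opA_def fun_eq_iff split: nat.split)

lemma opA_eventually_zero: "\<forall>n\<ge>N. x n = 0 \<Longrightarrow> \<forall>n\<ge>Suc N. opA x n = 0"
  by (auto simp: opA_def split: nat.split)

lemma sum_opA: "(\<Sum>n<Suc N. opA x n) = x N"
  by (induction N) (auto simp: opA_def)

text \<open>Each q_n(w) is at least -w, and the entries of Ax sum to zero.\<close>
lemma fobj_opA_ge: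
  assumes "x \<in> cc"
  shows "pi\<^sup>2 / 12 \<le> fobj (opA x)"
proof -
  obtain N where N: "\<forall>n\<ge>N. x n = 0" using assms by (auto simp: cc_iff_eventually_zero)
  have "0 = (\<Sum>n<Suc N. - opA x n)" unfolding sum_negf sum_opA using N by simp
  also have "\<dots> \<le> (\<Sum>n<Suc N. fquad n (opA x n))" by (intro sum_mono) (simp add: fquad_def)
  finally show ?thesis using fobj_eq_sum[OF opA_eventually_zero[OF N]] by simp
qed

lemma primal_value: "(INF x\<in>cc. ereal (fobj (opA x))) = ereal (pi\<^sup>2 / 12)"
proof (rule antisym)
  show "(INF x\<in>cc. ereal (fobj (opA x))) \<le> ereal (pi\<^sup>2 / 12)"
    using zero_in_cc
    by (rule INF_lower2) (simp add: opA_zero fobj_zero)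
  show "ereal (pi\<^sup>2 / 12) \<le> (INF x\<in>cc. ereal (fobj (opA x)))"
    by (rule INF_greatest) (simp only: ereal_less_eq(3) fobj_opA_ge)
qed

lemma sum_mult_opA:
  "(\<Sum>n<Suc N. y n * opA x n) = (\<Sum>n<N. (y n - y (Suc n)) * x n) + y N * x N"
  by (induction N) (auto simp: opA_def algebra_simps)

lemma pair_opA:
  assumes "x \<in> cc"
  shows "pair y (opA x) = pair (\<lambda>n. y n - y (Suc n)) x"
proof -
  obtain N where N: "\<forall>n\<ge>N. x n = 0" using assms by (auto simp: cc_iff_eventually_zero)
  have "pair y (opA x) = (\<Sum>n<Suc N. y n * opA x n)"
    by (rule pair_eq_sum[OF opA_eventually_zero[OF N]])
  also have "\<dots> = (\<Sum>n<N. (y n - y (Suc n)) * x n)"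
    by (simp only: sum_mult_opA) (simp add: N)
  also have "\<dots> = pair (\<lambda>n. y n - y (Suc n)) x"
    by (rule pair_eq_sum[OF N, symmetric])
  finally show ?thesis .
qed

lemma pair_eq_coordinate: "pair z (\<lambda>n. if n = k then 1 else 0) = z k"
  using pair_eq_sum[of "Suc k" "\<lambda>n. if n = k then 1 else 0" z] by simp

lemma adjA_eq:
  assumes "y \<in> l2"
  shows "adjA y = (\<lambda>n. y n - y (Suc n))"
  unfolding adjA_def
proof (rule the_equality)
  show "(\<lambda>n. y n - y (Suc n)) \<in> l2 \<and> (\<forall>x\<in>cc. pair (\<lambda>n. y n - y (Suc n)) x = pair y (opA x))"
    using l2_diff[OF assms l2_shift[OF assms]] by (simp add: pair_opA)
next
  fix z assume z: "z \<in> l2 \<and> (\<forall>x\<in>cc. pair z x = pair y (opA x))"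
  have "z k = y k - y (Suc k)" for k
  proof -
    define e where "e = (\<lambda>n. if n = k then 1 else 0 :: real)"
    have "e \<in> cc" unfolding cc_iff_eventually_zero e_def by (intro exI[of _ "Suc k"]) simp
    then have "pair z e = pair (\<lambda>n. y n - y (Suc n)) e" using z by (simp add: pair_opA)
    then show ?thesis by (simp only: e_def pair_eq_coordinate)
  qed
  then show "z = (\<lambda>n. y n - y (Suc n))" by auto
qed

lemma adjA_in_l2: "y \<in> l2 \<Longrightarrow> adjA y \<in> l2"
  by (simp add: adjA_eq l2_diff l2_shift)

lemma pair_adjA: "y \<in> l2 \<Longrightarrow> x \<in> cc \<Longrightarrow> pair (adjA y) x = pair y (opA x)"
  by (simp add: adjA_eq pair_opA)

text \<open>Equal differences make y - z constant, and the only constant sequence in l^2 is 0.\<close>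
lemma inj_on_adjA: "inj_on adjA l2"
proof (rule inj_onI)
  fix y z assume y: "y \<in> l2" and z: "z \<in> l2" and "adjA y = adjA z"
  then have diffs: "y n - y (Suc n) = z n - z (Suc n)" for n
    by (simp add: adjA_eq[OF y] adjA_eq[OF z] fun_eq_iff)
  have step: "y (Suc n) - z (Suc n) = y n - z n" for n
    using diffs[of n] by linarith
  have const: "y n - z n = y 0 - z 0" for n
    by (induction n) (simp_all add: step)
  have "(\<lambda>n. y n - z n) = (\<lambda>n. y 0 - z 0)" by (rule ext) (rule const)
  then have "(\<lambda>n. y 0 - z 0) \<in> l2" using l2_diff[OF y z] by simp
  then have "y 0 - z 0 = 0" by (rule l2_const_eq_zero)
  then show "y = z" using const by (auto simp: fun_eq_iff)
qed

lemma adjA_zero: "adjA (\<lambda>n. 0) = (\<lambda>n. 0)"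
  by (simp add: adjA_eq[OF zero_in_l2])

lemma uminus_adjA_eq_zero_iff:
  assumes "y \<in> l2"
  shows "(\<lambda>n. - adjA y n) = (\<lambda>n. 0) \<longleftrightarrow> y = (\<lambda>n. 0)"
proof
  assume "(\<lambda>n. - adjA y n) = (\<lambda>n. 0)"
  then have "adjA y = adjA (\<lambda>n. 0)" by (simp add: adjA_zero fun_eq_iff)
  with inj_on_adjA show "y = (\<lambda>n. 0)" using assms zero_in_l2 by (rule inj_onD)
qed (simp add: adjA_zero)

lemma fconj_zero: "fconj (\<lambda>x. 0) y = (if y = (\<lambda>n. 0) then 0 else \<infinity>)"
proof (cases "y = (\<lambda>n. 0)")
  case True
  have "cc \<noteq> {}" using zero_in_cc by blast
  then show ?thesis using True by (simp add: fconj_def pair_def)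
next
  case False
  then obtain k where k: "y k \<noteq> 0" by auto
  have "(SUP x\<in>cc. ereal (pair y x) - 0) = \<infinity>"
  proof (rule SUP_PInfty)
    fix r :: nat
    define x where "x = (\<lambda>n. if n = k then real r / y k else 0)"
    have "x \<in> cc" unfolding cc_iff_eventually_zero x_def by (intro exI[of _ "Suc k"]) simp
    moreover have "pair y x = real r"
      using k pair_eq_sum[of "Suc k" x y] by (simp add: x_def)
    ultimately show "\<exists>x\<in>cc. ereal (real r) \<le> ereal (pair y x) - 0" by force
  qed
  then show ?thesis using False by (simp add: fconj_def)
qed

lemma fconj_fobj_ge: "ereal (- (pi\<^sup>2 / 12)) \<le> fconj (\<lambda>x. ereal (fobj x)) y"
proof -
  have "ereal (pair y (\<lambda>n. 0)) - ereal (fobj (\<lambda>n. 0)) \<le> fconj (\<lambda>x. ereal (fobj x)) y"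
    unfolding fconj_def using zero_in_cc by (rule SUP_upper)
  then show ?thesis by (simp add: pair_def fobj_zero)
qed

text \<open>Truncations of the minimiser (n^-2) of the unconstrained problem.\<close>
lemma fobj_truncation:
  "fobj (\<lambda>n. if n < N then 1 / (real (Suc n))\<^sup>2 else 0)
    = pi\<^sup>2 / 12 - (\<Sum>n<N. 1 / (2 * (real (Suc n))\<^sup>2))"
proof -
  have "fquad n (1 / (real (Suc n))\<^sup>2) = - (1 / (2 * (real (Suc n))\<^sup>2))" for n
  proof -
    have "b * (1 / b)\<^sup>2 / 2 - 1 / b = - (1 / (2 * b))" if "b > 0" for b :: real
      using that by (simp add: field_simps power2_eq_square)
    then show ?thesis unfolding fquad_def by simp
  qed
  then show ?thesis by (subst fobj_eq_sum[of N]) (simp_all add: sum_negf)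
qed

lemma fconj_fobj_zero: "fconj (\<lambda>x. ereal (fobj x)) (\<lambda>n. 0) = 0"
proof (rule antisym)
  show "fconj (\<lambda>x. ereal (fobj x)) (\<lambda>n. 0) \<le> 0"
    unfolding fconj_def by (rule SUP_least) (simp add: pair_def fobj_nonneg)
next
  define xs where "xs N = (\<lambda>n. if n < N then 1 / (real (Suc n))\<^sup>2 else 0)" for N
  have "(\<lambda>N. \<Sum>n<N. 1 / (2 * (real (Suc n))\<^sup>2)) \<longlonglongrightarrow> pi\<^sup>2 / 12"
    using half_inverse_squares_sums by (simp add: sums_def)
  then have "(\<lambda>N. - fobj (xs N)) \<longlonglongrightarrow> 0"
    unfolding xs_def fobj_truncation using tendsto_diff[OF _ tendsto_const[of "pi\<^sup>2 / 12"]] by force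
  then have "(\<lambda>N. ereal (- fobj (xs N))) \<longlonglongrightarrow> 0"
    using tendsto_ereal[of _ 0] by (simp add: zero_ereal_def)
  moreover have "ereal (- fobj (xs N)) \<in> (\<lambda>x. ereal (pair (\<lambda>n. 0) x) - ereal (fobj x)) ` cc" for N
  proof -
    have "xs N \<in> cc" unfolding cc_iff_eventually_zero xs_def by (intro exI[of _ N]) simp
    then show ?thesis by (auto simp: pair_def intro!: image_eqI[where x = "xs N"])
  qed
  ultimately show "0 \<le> fconj (\<lambda>x. ereal (fobj x)) (\<lambda>n. 0)"
    unfolding fconj_def by (intro Sup_lim) auto
qed

lemma dual_objective_eq:
  assumes "y \<in> l2"
  shows "- fconj (\<lambda>x. ereal (fobj x)) y - fconj (\<lambda>x. 0) (\<lambda>n. - adjA y n)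
    = (if y = (\<lambda>n. 0) then 0 else - \<infinity>)"
proof (cases "y = (\<lambda>n. 0)")
  case True
  then show ?thesis by (simp add: fconj_fobj_zero fconj_zero adjA_zero)
next
  case False
  have "- fconj (\<lambda>x. ereal (fobj x)) y \<noteq> \<infinity>"
    using fconj_fobj_ge[of y] by (cases "fconj (\<lambda>x. ereal (fobj x)) y") auto
  then show ?thesis using False
    by (cases "- fconj (\<lambda>x. ereal (fobj x)) y") (simp_all add: fconj_zero uminus_adjA_eq_zero_iff assms)
qed

lemma dual_feasible_set: "{y\<in>l2. fconj (\<lambda>x. 0) (\<lambda>n. - adjA y n) < \<infinity>} = {\<lambda>n. 0}"
  using uminus_adjA_eq_zero_iff zero_in_l2 by (auto simp: fconj_zero)

lemma dual_value:
  "(SUP y\<in>l2. - fconj (\<lambda>x. ereal (fobj x)) y - fconj (\<lambda>x. 0) (\<lambda>n. - adjA y n)) = 0"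
proof (rule antisym)
  show "(SUP y\<in>l2. - fconj (\<lambda>x. ereal (fobj x)) y - fconj (\<lambda>x. 0) (\<lambda>n. - adjA y n)) \<le> 0"
    by (rule SUP_least) (simp add: dual_objective_eq)
  show "0 \<le> (SUP y\<in>l2. - fconj (\<lambda>x. ereal (fobj x)) y - fconj (\<lambda>x. 0) (\<lambda>n. - adjA y n))"
    using zero_in_l2 by (rule SUP_upper2) (simp add: dual_objective_eq zero_in_l2)
qed

lemma tendsto_coordinate_if_l2norm_tendsto_zero:
  assumes "\<And>k. (\<lambda>n. X k n - x n) \<in> l2"
    and "(\<lambda>k. l2norm (\<lambda>n. X k n - x n)) \<longlonglongrightarrow> 0"
  shows "(\<lambda>k. X k n) \<longlonglongrightarrow> x n"
proof -
  have "(\<lambda>k. X k n - x n) \<longlonglongrightarrow> 0"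
    using assms(2) by (rule Lim_null_comparison[rotated]) (simp add: abs_le_l2norm[OF assms(1)])
  then show ?thesis by (rule LIM_zero_cancel)
qed

text \<open>fobj is the supremum of its partial sums; each of these depends continuously on
finitely many coordinates, and l^2 convergence implies coordinatewise convergence.\<close>
lemma fobj_lsc: "lsc_cc (\<lambda>x. ereal (fobj x))"
  unfolding lsc_cc_def
proof (intro ballI allI impI, elim conjE)
  fix x X assume x: "x \<in> cc" and X: "\<forall>k. X k \<in> cc"
    and L: "(\<lambda>k. l2norm (\<lambda>n. X k n - x n)) \<longlonglongrightarrow> 0"
  define partial where "partial N z = (\<Sum>n<N. (real (Suc n))\<^sup>2 / 2 * (z n - 1 / (real (Suc n))\<^sup>2)\<^sup>2)"
    for N and z :: "nat \<Rightarrow> real"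
  have partial_le: "partial N z \<le> fobj z" if "z \<in> cc" for z N
    unfolding partial_def fobj_def by (rule sum_le_suminf[OF fobj_summable[OF that]]) simp_all
  have partial_below: "ereal (partial N x) \<le> liminf (\<lambda>k. ereal (fobj (X k)))" for N
  proof -
    have "(\<lambda>k. X k n) \<longlonglongrightarrow> x n" for n
      using X x cc_subset_l2 by (intro tendsto_coordinate_if_l2norm_tendsto_zero[OF l2_diff L]) auto
    then have "(\<lambda>k. ereal (partial N (X k))) \<longlonglongrightarrow> ereal (partial N x)"
      unfolding partial_def by (intro tendsto_ereal tendsto_intros)
    then have "ereal (partial N x) = liminf (\<lambda>k. ereal (partial N (X k)))"
      by (rule lim_imp_Liminf[symmetric, OF trivial_limit_sequentially])
    also have "\<dots> \<le> liminf (\<lambda>k. ereal (fobj (X k)))"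
      using partial_le X by (intro Liminf_mono) simp
    finally show ?thesis .
  qed
  have "(\<lambda>N. ereal (partial N x)) \<longlonglongrightarrow> ereal (fobj x)"
    unfolding partial_def fobj_def by (intro tendsto_ereal summable_LIMSEQ fobj_summable x)
  then show "ereal (fobj x) \<le> liminf (\<lambda>k. ereal (fobj (X k)))"
    by (rule LIMSEQ_le_const2) (use partial_below in blast)
qed

lemma edom_fobj: "edom (\<lambda>x. ereal (fobj x)) = cc"
  by (simp add: edom_def)

lemma edom_zero: "edom (\<lambda>x. 0) = cc"
  by (simp add: edom_def)

lemma zero_in_core_domain_difference:
  "(\<lambda>n. 0) \<in> core {(\<lambda>n. opA u n - v n) | u v. u \<in> edom (\<lambda>x. 0) \<and> v \<in> edom (\<lambda>x. ereal (fobj x))}"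
  unfolding core_def edom_fobj edom_zero
proof (intro CollectI conjI ballI zero_in_cc)
  fix d assume d: "d \<in> cc"
  have "(\<lambda>n. 0 + t * d n) \<in> {(\<lambda>n. opA u n - v n) | u v. u \<in> cc \<and> v \<in> cc}" for t
  proof -
    have neg: "(\<lambda>n. - (t * d n)) \<in> cc" using d by (auto simp: cc_iff_eventually_zero)
    have "\<exists>u v. (\<lambda>n. 0 + t * d n) = (\<lambda>n. opA u n - v n) \<and> u \<in> cc \<and> v \<in> cc"
      by (rule exI[of _ "\<lambda>n. 0"], rule exI[of _ "\<lambda>n. - (t * d n)"]) (simp add: opA_zero zero_in_cc neg)
    then show ?thesis by simp
  qed
  then show "\<exists>e>0. \<forall>t. 0 \<le> t \<and> t \<le> e \<longrightarrow> (\<lambda>n. 0 + t * d n) \<in> {(\<lambda>n. opA u n - v n) | u v. u \<in> cc \<and> v \<in> cc}"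
    by (intro exI[of _ 1]) simp
qed

theorem mainTheorem12:
  fixes f g :: "(nat \<Rightarrow> real) \<Rightarrow> ereal"
  defines "f \<equiv> (\<lambda>x. ereal (fobj x))"
      and "g \<equiv> (\<lambda>x. 0)"
  shows "(\<forall>y\<in>l2. fconj g y = (if y = (\<lambda>n. 0) then 0 else \<infinity>))
    \<and> (\<forall>y\<in>l2. adjA y \<in> l2 \<and> (\<forall>x\<in>cc. pair (adjA y) x = pair y (opA x)))
    \<and> inj_on adjA l2
    \<and> {y\<in>l2. fconj g (\<lambda>n. - adjA y n) < \<infinity>} = {\<lambda>n. 0}
    \<and> (SUP y\<in>l2. - fconj f y - fconj g (\<lambda>n. - adjA y n)) = 0
    \<and> - fconj f (\<lambda>n. 0) - fconj g (\<lambda>n. - adjA (\<lambda>n. 0) n) = 0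
    \<and> (INF x\<in>cc. f (opA x) + g x) = ereal (pi\<^sup>2 / 12)
    \<and> (INF x\<in>cc. f (opA x) + g x) - (SUP y\<in>l2. - fconj f y - fconj g (\<lambda>n. - adjA y n))
        = ereal (pi\<^sup>2 / 12)
    \<and> pi\<^sup>2 / 12 > 0
    \<and> convex_cc f \<and> convex_cc g \<and> lsc_cc f \<and> lsc_cc g
    \<and> (\<lambda>n. 0) \<in> core {(\<lambda>n. opA u n - v n) | u v. u \<in> edom g \<and> v \<in> edom f}"
proof -
  have "convex_cc g" "lsc_cc g"
    unfolding g_def convex_cc_def lsc_cc_def by (simp_all add: Liminf_const)
  then show ?thesis
    unfolding f_def g_def
    using fconj_zero adjA_in_l2 pair_adjA inj_on_adjA dual_feasible_set dual_value
      dual_objective_eq[OF zero_in_l2] primal_value fobj_convex fobj_lsc zero_in_core_domain_difference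
    by simp
qed

end
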